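(* Let $A\in\mathbb{R}^{n\times n}$ be symmetric with $r:=\mathrm{rank}(A)$, and let $\epsilon\ge 0$. Let $S\subseteq\{1,\dots,n\}$ with $|S|=r$ be such that the principal submatrix $A[S]$ is nonsingular, and let $T$ be obtained from $S$ by replacing one element of $S$ by an element of $\{1,\dots,n\}\setminus S$. If $|\det(A[T])|\le(1+\epsilon)|\det(A[S])|$, then $|\det(A[S,T])|\le\sqrt{1+\epsilon}\,|\det(A[S])|$.
   Context: $A[S,T]$ denotes the submatrix of $A$ with row indices $S$ and column indices $T$, and $A[S]:=A[S,S]$ is the principal submatrix with row/column indices $S$ (index sets taken in a fixed order; only absolute values of determinants are involved). *)

theory Defs
  imports "Jordan_Normal_Form.DL_Rank" "Jordan_Normal_Form.DL_Submatrix"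
begin

end

theory Submission
  imports Defs "Jordan_Normal_Form.DL_Rank_Submatrix"
begin

text \<open>Since \<open>A\<close> has rank \<open>r = |S|\<close> and \<open>A[S]\<close> is nonsingular, the columns of \<open>A\<close> indexed by
  \<open>S\<close> span its column space, so \<open>A = A[\<star>,S] X\<close> for some \<open>r \<times> n\<close> matrix \<open>X\<close> and every
  minor factors as \<open>det A[U,T] = det A[U,S] det X[\<star>,T]\<close>. Taking \<open>U = S\<close> and \<open>U = T\<close> and using
  \<open>A[T,S] = A[S,T]\<^sup>T\<close> gives \<open>det A[S,T]\<^sup>2 = det A[S] det A[T]\<close>, which the hypothesis bounds
  by \<open>(1 + \<epsilon>) det A[S]\<^sup>2\<close>.\<close>

lemma submatrix_carrier_mat:
  assumes "A \<in> carrier_mat n m"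
  shows "submatrix A I J \<in> carrier_mat (card (I \<inter> {..<n})) (card (J \<inter> {..<m}))"
proof -
  have "{a. a < n \<and> a \<in> I} = I \<inter> {..<n}" and "{a. a < m \<and> a \<in> J} = J \<inter> {..<m}"
    by auto
  then show ?thesis
    using assms by (intro carrier_matI) (simp_all add: dim_submatrix)
qed

lemma submatrix_mult:
  assumes C: "C \<in> carrier_mat n r" and X: "X \<in> carrier_mat r m"
  shows "submatrix (C * X) U V = submatrix C U UNIV * submatrix X UNIV V"
proof (rule eq_matI)
  show "dim_row (submatrix (C * X) U V) = dim_row (submatrix C U UNIV * submatrix X UNIV V)"
    using C X by (simp add: dim_submatrix)
  show "dim_col (submatrix (C * X) U V) = dim_col (submatrix C U UNIV * submatrix X UNIV V)"
    using C X by (simp add: dim_submatrix)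
  fix i j assume i: "i < dim_row (submatrix C U UNIV * submatrix X UNIV V)"
    and j: "j < dim_col (submatrix C U UNIV * submatrix X UNIV V)"
  have i': "i < card {a. a < n \<and> a \<in> U}" and j': "j < card {a. a < m \<and> a \<in> V}"
    using i j C X by (auto simp: dim_submatrix)
  have pick_i: "pick U i < n" using pick_le[OF i'] .
  have pick_j: "pick V j < m" using pick_le[OF j'] .
  have "submatrix (C * X) U V $$ (i, j) = (C * X) $$ (pick U i, pick V j)"
    using submatrix_index[of i "C * X" U j V] i' j' C X by simp
  also have "\<dots> = (\<Sum>l<r. C $$ (pick U i, l) * X $$ (l, pick V j))"
    using pick_i pick_j C X by (simp add: scalar_prod_def lessThan_atLeast0)
  also have "\<dots> = (submatrix C U UNIV * submatrix X UNIV V) $$ (i, j)"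
    using i' j' C X
    by (simp add: scalar_prod_def dim_submatrix submatrix_index pick_UNIV lessThan_atLeast0)
  finally show "submatrix (C * X) U V $$ (i, j) = (submatrix C U UNIV * submatrix X UNIV V) $$ (i, j)" .
qed

lemma transpose_submatrix:
  "transpose_mat (submatrix A I J) = submatrix (transpose_mat A) J I"
proof (rule eq_matI)
  fix i j assume "i < dim_row (submatrix (transpose_mat A) J I)" "j < dim_col (submatrix (transpose_mat A) J I)"
  then show "transpose_mat (submatrix A I J) $$ (i, j) = submatrix (transpose_mat A) J I $$ (i, j)"
    using pick_le[of i "dim_col A" J] pick_le[of j "dim_row A" I]
    by (simp add: dim_submatrix submatrix_index)
qed (auto simp: dim_submatrix)

lemma (in vec_space) cols_submatrix_indpt_if_minor_nonzero:
  assumes A: "A \<in> carrier_mat n nc" and minor: "det (submatrix A I J) \<noteq> 0"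
  shows "distinct (cols (submatrix A UNIV J))" and "lin_indpt (set (cols (submatrix A UNIV J)))"
proof -
  define M where "M = submatrix A I J"
  define k where "k = card {i. i < n \<and> i \<in> I}"
  have "dim_row M = dim_col M"
    using minor det_def unfolding M_def by metis
  moreover have "dim_row M = k"
    unfolding M_def k_def dim_submatrix carrier_matD(1)[OF A] ..
  ultimately have M: "M \<in> carrier_mat k k"
    by (intro carrier_matI) simp_all
  have rank_M: "vec_space.rank k M = k"
    using vec_space.low_rank_det_zero[OF M] minor unfolding M_def .
  have distinct_M: "distinct (cols M)"
    using vec_space.non_distinct_low_rank[OF M] rank_M by (metis less_irrefl)
  have indpt_M: "module.lin_indpt class_ring (module_vec TYPE('a) k) (set (cols M))"
    by (rule vec_space.full_rank_lin_indpt[OF M rank_M distinct_M])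
  have split: "M = submatrix (submatrix A UNIV J) I UNIV"
    unfolding M_def by (rule submatrix_split)
  have distinct_M': "distinct (cols (submatrix (submatrix A UNIV J) I UNIV))"
    using distinct_M unfolding split .
  show "distinct (cols (submatrix A UNIV J))"
    by (rule distinct_cols_submatrix_UNIV[OF distinct_M'])
  have "submatrix A UNIV J \<in> carrier_mat n (dim_col (submatrix A UNIV J))"
    by (intro carrier_matI) (simp_all only: dim_submatrix carrier_matD(1)[OF A], simp)
  then show "lin_indpt (set (cols (submatrix A UNIV J)))"
    using lin_dep_submatrix_UNIV[OF _ _ distinct_M'] indpt_M[unfolded k_def split] by blast
qed
lemma (in vec_space) col_in_span_of_indpt_cols:
  assumes A: "A \<in> carrier_mat n nc" and C: "C \<in> carrier_mat n r"
    and sub: "set (cols C) \<subseteq> set (cols A)" and dist: "distinct (cols C)"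
    and indpt: "lin_indpt (set (cols C))" and rank: "rank A = r" and k: "k < nc"
  shows "col A k \<in> span (set (cols C))"
proof (rule ccontr)
  let ?U = "set (cols C)"
  assume not_in_span: "col A k \<notin> span ?U"
  have U: "?U \<subseteq> carrier_vec n" using C cols_dim by blast
  have "col A k \<in> carrier_vec n" using A k by auto
  moreover have "col A k \<notin> ?U" using span_mem[OF U] not_in_span by blast
  ultimately have "lin_indpt (insert (col A k) ?U)"
    using lin_dep_iff_in_span[OF U indpt] not_in_span by auto
  moreover have "col A k \<in> set (cols A)"
    using A k by (metis carrier_matD(2) cols_length cols_nth nth_mem)
  ultimately have "card (insert (col A k) ?U) \<le> r"
    using rank_ge_card_indpt[OF A, of "insert (col A k) ?U"] sub rank by simp
  moreover have "card (insert (col A k) ?U) = Suc r"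
    using distinct_card[OF dist] C \<open>col A k \<notin> ?U\<close> by simp
  ultimately show False by simp
qed

lemma (in vec_space) rank_factorization:
  assumes A: "A \<in> carrier_mat n nc" and C: "C \<in> carrier_mat n r"
    and sub: "set (cols C) \<subseteq> set (cols A)" and dist: "distinct (cols C)"
    and indpt: "lin_indpt (set (cols C))" and rank: "rank A = r"
  obtains X where "X \<in> carrier_mat r nc" and "A = C * X"
proof -
  have "\<exists>x \<in> carrier_vec r. col A k = C *\<^sub>v x" if k: "k < nc" for k
  proof -
    have U: "set (cols C) \<subseteq> carrier_vec n" using C cols_dim by blast
    obtain c where "lincomb c (set (cols C)) = col A k"
      using finite_in_span[OF _ U col_in_span_of_indpt_cols[OF A C sub dist indpt rank k]] by auto
    then show ?thesis
      using mat_mult_eq_lincomb[OF C dist, of c] by (intro bexI[of _ "vec r (\<lambda>i. c (col C i))"]) auto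
  qed
  then obtain x where x: "\<And>k. k < nc \<Longrightarrow> x k \<in> carrier_vec r \<and> col A k = C *\<^sub>v x k"
    by metis
  define X where "X = mat r nc (\<lambda>(a, k). x k $ a)"
  have X: "X \<in> carrier_mat r nc" by (simp add: X_def)
  have "A = C * X"
  proof (rule eq_matI)
    fix a k assume "a < dim_row (C * X)" "k < dim_col (C * X)"
    then have a: "a < n" and k: "k < nc" using C X by auto
    have "col X k = x k" using x[OF k] k by (auto simp: X_def)
    have "A $$ (a, k) = (C *\<^sub>v x k) $ a" using x[OF k] A a k by (metis col_def carrier_matD index_vec)
    also have "\<dots> = row C a \<bullet> col X k" using C a \<open>col X k = x k\<close> by simp
    also have "\<dots> = (C * X) $$ (a, k)" using C X a k by simp
    finally show "A $$ (a, k) = (C * X) $$ (a, k)" .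
  qed (use A C X in auto)
  with X show ?thesis by (rule that)
qed

lemma submatrix_factor_through_cols:
  fixes A :: "'a::field mat"
  assumes A: "A \<in> carrier_mat n m" and S: "S \<subseteq> {0..<m}"
    and minor: "det (submatrix A R S) \<noteq> 0" and rank: "card S = vec_space.rank n A"
  obtains X where "X \<in> carrier_mat (card S) m"
    and "\<And>U V. submatrix A U V = submatrix A U S * submatrix X UNIV V"
proof -
  interpret vec_space "TYPE('a)" n .
  define C where "C = submatrix A UNIV S"
  have "S \<inter> {..<m} = S" using S by auto
  then have C: "C \<in> carrier_mat n (card S)"
    using submatrix_carrier_mat[OF A, of UNIV S] unfolding C_def by simp
  have sub: "set (cols C) \<subseteq> set (cols A)"
    unfolding C_def by (rule cols_submatrix_subset)
  have dist: "distinct (cols C)"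
    unfolding C_def by (rule cols_submatrix_indpt_if_minor_nonzero(1)[OF A minor])
  have indpt: "lin_indpt (set (cols C))"
    unfolding C_def by (rule cols_submatrix_indpt_if_minor_nonzero(2)[OF A minor])
  obtain X where X: "X \<in> carrier_mat (card S) m" and AX: "A = C * X"
    by (rule rank_factorization[OF A C sub dist indpt rank[symmetric]])
  have "submatrix A U V = submatrix A U S * submatrix X UNIV V" for U V
  proof -
    have "submatrix A U V = submatrix C U UNIV * submatrix X UNIV V"
      unfolding AX by (rule submatrix_mult[OF C X])
    also have "submatrix C U UNIV = submatrix A U S"
      unfolding C_def by (rule submatrix_split[symmetric])
    finally show ?thesis .
  qed
  with X show ?thesis by (rule that)
qed

lemma det_submatrix_square_eq_if_symmetric:
  fixes A :: "'a::field mat"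
  assumes A: "A \<in> carrier_mat n n" and sym: "transpose_mat A = A"
    and S: "S \<subseteq> {0..<n}" and minor: "det (submatrix A S S) \<noteq> 0"
    and rank: "card S = vec_space.rank n A"
    and T: "T \<subseteq> {0..<n}" and card_T: "card T = card S"
  shows "det (submatrix A S T) ^ 2 = det (submatrix A S S) * det (submatrix A T T)"
proof -
  obtain X where X: "X \<in> carrier_mat (card S) n"
    and factor: "\<And>U V. submatrix A U V = submatrix A U S * submatrix X UNIV V"
    using submatrix_factor_through_cols[OF A S minor rank] by blast
  have restrict: "U \<inter> {..<n} = U" if "U \<subseteq> {0..<n}" for U
    using that by auto
  have XT: "submatrix X UNIV T \<in> carrier_mat (card S) (card S)"
    using submatrix_carrier_mat[OF X, of UNIV T] restrict[OF T] card_T by simp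
  have det_factor: "det (submatrix A U T) = det (submatrix A U S) * det (submatrix X UNIV T)"
    if "U \<subseteq> {0..<n}" "card U = card S" for U
    using factor[of U T] det_mult[OF _ XT] submatrix_carrier_mat[OF A, of U S]
      restrict[OF that(1)] restrict[OF S] that(2) by simp
  have "det (submatrix A T S) = det (transpose_mat (submatrix A S T))"
    using transpose_submatrix[of A S T] sym by simp
  also have "\<dots> = det (submatrix A S T)"
    using det_transpose submatrix_carrier_mat[OF A, of S T] restrict[OF S] restrict[OF T] card_T
    by simp
  finally have symmetric_minor: "det (submatrix A T S) = det (submatrix A S T)" .
  show ?thesis
    using det_factor[OF S refl] det_factor[OF T card_T] symmetric_minor
    by (simp add: power2_eq_square)
qed

lemma abs_le_sqrt_mult_if_square_eq:
  fixes p s t c :: real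
  assumes "p ^ 2 = s * t" and "\<bar>t\<bar> \<le> c * \<bar>s\<bar>"
  shows "\<bar>p\<bar> \<le> sqrt c * \<bar>s\<bar>"
proof -
  have "p ^ 2 = \<bar>s\<bar> * \<bar>t\<bar>" using assms(1) by (metis abs_mult abs_power2)
  also have "\<dots> \<le> c * \<bar>s\<bar> ^ 2"
    using mult_left_mono[OF assms(2), of "\<bar>s\<bar>"] by (simp add: power2_eq_square algebra_simps)
  finally have "sqrt (p ^ 2) \<le> sqrt (c * \<bar>s\<bar> ^ 2)" by (rule real_sqrt_le_mono)
  then show ?thesis by (simp add: real_sqrt_mult)
qed

theorem lemma2p4:
  fixes A :: "real mat" and n r :: nat and \<epsilon> :: real
    and S T :: "nat set" and i j :: nat
  assumes "A \<in> carrier_mat n n"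
    and "transpose_mat A = A"
    and "r = vec_space.rank n A"
    and "\<epsilon> \<ge> 0"
    and "S \<subseteq> {0..<n}" and "card S = r"
    and "det (submatrix A S S) \<noteq> 0"
    and "i \<in> S" and "j \<in> {0..<n} - S"
    and "T = insert j (S - {i})"
    and "\<bar>det (submatrix A T T)\<bar> \<le> (1 + \<epsilon>) * \<bar>det (submatrix A S S)\<bar>"
  shows "\<bar>det (submatrix A S T)\<bar> \<le> sqrt (1 + \<epsilon>) * \<bar>det (submatrix A S S)\<bar>"
proof -
  have T: "T \<subseteq> {0..<n}" using assms(5,9,10) by auto
  have "finite S" using assms(5) finite_subset by blast
  then have "card T = Suc (card (S - {i}))" using assms(9,10) by simp
  also have "\<dots> = card S" using card_Suc_Diff1 \<open>finite S\<close> assms(8) .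
  finally have "card T = card S" .
  then have "det (submatrix A S T) ^ 2 = det (submatrix A S S) * det (submatrix A T T)"
    using det_submatrix_square_eq_if_symmetric[OF assms(1,2,5,7)] assms(3,6) T by simp
  then show ?thesis by (rule abs_le_sqrt_mult_if_square_eq[OF _ assms(11)])
qed

end
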